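(* Assume the Diagonal Conjecture (DC) holds: for every $r \ge 2$, all integers $3 \le s \le t$ and all integers $k_3,\dots,k_r \ge 2$, we have $R(s,t,k_3,\dots,k_r) \ge R(s-1,t+1,k_3,\dots,k_r)$. Then for every integer $k \ge 3$ and every integer $r \ge 1$, $$R_{2r}(k)-1 \ge (R_r(k-1)-1)(R_r(k+1)-1).$$
   Context: $R(k_1,\dots,k_r)$ denotes the multicolor Ramsey number: the least $n$ such that every coloring of the edges of $K_n$ with $r$ colors contains, for some $i$, a complete subgraph $K_{k_i}$ all of whose edges have color $i$. This number does not depend on the order of the arguments. $R_r(k)=R(k,\dots,k)$ with $r$ arguments equal to $k$. *)

theory Defs
  imports Main
begin

definition edge_colouring :: "nat \<Rightarrow> nat \<Rightarrow> (nat set \<Rightarrow> nat) \<Rightarrow> bool" where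
  "edge_colouring n r c \<longleftrightarrow> (\<forall>e. e \<subseteq> {..<n} \<and> card e = 2 \<longrightarrow> c e < r)"

definition mono_clique :: "(nat set \<Rightarrow> nat) \<Rightarrow> nat \<Rightarrow> nat set \<Rightarrow> bool" where
  "mono_clique c i S \<longleftrightarrow> (\<forall>e. e \<subseteq> S \<and> card e = 2 \<longrightarrow> c e = i)"

definition ramsey_arrow :: "nat \<Rightarrow> nat list \<Rightarrow> bool" where
  "ramsey_arrow n ks \<longleftrightarrow>
     (\<forall>c. edge_colouring n (length ks) c \<longrightarrow>
        (\<exists>i < length ks. \<exists>S. S \<subseteq> {..<n} \<and> card S = ks ! i \<and> mono_clique c i S))"

definition ramsey_num :: "nat list \<Rightarrow> nat" where
  "ramsey_num ks = (LEAST n. ramsey_arrow n ks)"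

definition ramsey_diag :: "nat \<Rightarrow> nat \<Rightarrow> nat" where
  "ramsey_diag r k = ramsey_num (replicate r k)"

end

theory Submission
  imports Defs "HOL-Library.Ramsey" "HOL-Combinatorics.List_Permutation"
begin

text \<open>Product colourings give R(as @ bs) - 1 \<ge> (R(as) - 1) (R(bs) - 1): blow up a critical
  colouring of K_{R(as)-1} by replacing each vertex with a copy of a critical colouring of
  K_{R(bs)-1} in fresh colours. With as = (k-1,...,k-1) and bs = (k+1,...,k+1), both of length r,
  it remains to see R(as @ bs) \<le> R_{2r}(k): since R is symmetric in its arguments, r
  applications of DC turn the pairs (k, k) one after another into (k-1, k+1).\<close>

lemma ramsey_arrow_iff_partn_lst: "ramsey_arrow n ks \<longleftrightarrow> partn_lst {..<n} ks 2"
proof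
  assume arrow: "ramsey_arrow n ks"
  show "partn_lst {..<n} ks 2"
    unfolding partn_lst_def
  proof
    fix c assume "c \<in> nsets {..<n} 2 \<rightarrow> {..<length ks}"
    then have "edge_colouring n (length ks) c"
      by (auto simp: edge_colouring_def nsets_def intro: finite_subset)
    then obtain i S where "i < length ks" "S \<subseteq> {..<n}" "card S = ks ! i" "mono_clique c i S"
      using arrow unfolding ramsey_arrow_def by blast
    moreover have "finite S"
      using \<open>S \<subseteq> {..<n}\<close> by (rule finite_subset) simp
    ultimately show "\<exists>i<length ks. monochromatic {..<n} (ks ! i) 2 c i"
      unfolding monochromatic_def mono_clique_def nsets_def by blast
  qed
next
  assume partn: "partn_lst {..<n} ks 2"
  show "ramsey_arrow n ks"
    unfolding ramsey_arrow_def
  proof (intro allI impI)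
    fix c assume "edge_colouring n (length ks) c"
    then have "c \<in> nsets {..<n} 2 \<rightarrow> {..<length ks}"
      by (auto simp: edge_colouring_def nsets_def)
    then obtain i H where "i < length ks" "H \<in> nsets {..<n} (ks ! i)" "c ` nsets H 2 \<subseteq> {i}"
      by (rule partn_lstE[OF partn]) simp_all
    then show "\<exists>i<length ks. \<exists>S. S \<subseteq> {..<n} \<and> card S = ks ! i \<and> mono_clique c i S"
      unfolding mono_clique_def nsets_def by (blast intro: finite_subset)
  qed
qed

lemma ramsey_arrow_mono: "ramsey_arrow m ks \<Longrightarrow> m \<le> n \<Longrightarrow> ramsey_arrow n ks"
  by (simp add: ramsey_arrow_iff_partn_lst partn_lst_greater_resource)

lemma ramsey_arrow_ramsey_num: "ramsey_arrow (ramsey_num ks) ks"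
  unfolding ramsey_num_def ramsey_arrow_iff_partn_lst by (rule LeastI_ex) (rule ramsey_full)

lemma ramsey_arrow_iff_ramsey_num_le: "ramsey_arrow n ks \<longleftrightarrow> ramsey_num ks \<le> n"
  by (metis Least_le ramsey_num_def ramsey_arrow_mono ramsey_arrow_ramsey_num)

lemma ramsey_arrow_perm:
  assumes arrow: "ramsey_arrow n xs" and perm: "mset xs = mset ys"
  shows "ramsey_arrow n ys"
proof -
  obtain f where f: "bij_betw f {..<length ys} {..<length xs}"
    and ys_xs: "\<forall>j<length ys. ys ! j = xs ! f j"
    using permutation_Ex_bij[of ys xs] perm by auto
  show ?thesis
    unfolding ramsey_arrow_def
  proof (intro allI impI)
    fix c assume c: "edge_colouring n (length ys) c"
    then have "edge_colouring n (length xs) (f \<circ> c)"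
      using bij_betw_apply[OF f] by (auto simp: edge_colouring_def)
    then obtain i S where i: "i < length xs" and S: "S \<subseteq> {..<n}" "card S = xs ! i"
      and mono: "mono_clique (f \<circ> c) i S"
      using arrow unfolding ramsey_arrow_def by blast
    obtain j where j: "j < length ys" "f j = i"
      using bij_betw_imp_surj_on[OF f] i by (metis imageE lessThan_iff)
    have "mono_clique c j S"
      unfolding mono_clique_def
    proof (intro allI impI)
      fix e assume e: "e \<subseteq> S \<and> card e = 2"
      then have "c e < length ys"
        using c S(1) unfolding edge_colouring_def by blast
      moreover have "f (c e) = f j"
        using mono e j(2) unfolding mono_clique_def by simp
      ultimately show "c e = j"
        using inj_onD[OF bij_betw_imp_inj_on[OF f]] j(1) by simp
    qed
    then show "\<exists>j<length ys. \<exists>S. S \<subseteq> {..<n} \<and> card S = ys ! j \<and> mono_clique c j S"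
      using j S ys_xs by metis
  qed
qed

lemma ramsey_num_perm: "mset xs = mset ys \<Longrightarrow> ramsey_num xs = ramsey_num ys"
  by (metis ramsey_arrow_iff_ramsey_num_le ramsey_arrow_perm ramsey_arrow_ramsey_num le_antisym)

lemma ramsey_num_pos:
  assumes "0 \<notin> set ks" shows "0 < ramsey_num ks"
proof -
  have "edge_colouring 0 (length ks) c" for c
    by (simp add: edge_colouring_def)
  moreover have "\<not> mono_clique c i {}" if "i < length ks" and "card {} = ks ! i" for c i
    using that assms nth_mem by force
  ultimately have "\<not> ramsey_arrow 0 ks"
    unfolding ramsey_arrow_def by auto
  then show ?thesis
    using ramsey_arrow_iff_ramsey_num_le by auto
qed

lemma mono_clique_image:
  assumes inj: "inj_on g S" and edges: "\<And>e. e \<subseteq> S \<Longrightarrow> card e = 2 \<Longrightarrow> c (g ` e) = i"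
  shows "mono_clique c i (g ` S)"
  unfolding mono_clique_def
proof (intro allI impI)
  fix e' assume e': "e' \<subseteq> g ` S \<and> card e' = 2"
  define e where "e = S \<inter> g -` e'"
  have "g ` e = e'"
    using e' unfolding e_def by auto
  moreover have "inj_on g e"
    using inj unfolding e_def by (rule inj_on_subset) auto
  ultimately have "card e = 2"
    using e' card_image by metis
  then show "c e' = i"
    using edges[of e] \<open>g ` e = e'\<close> unfolding e_def by simp
qed

lemma div_mod_eq_imp_eq: "(x::nat) div B = y div B \<Longrightarrow> x mod B = y mod B \<Longrightarrow> x = y"
  by (metis div_mult_mod_eq)

lemma div_mod_image_subset:
  assumes "E \<subseteq> {..<A * B}"
  shows "(\<lambda>x. x div B) ` E \<subseteq> {..<A}" "(\<lambda>x. x mod B) ` E \<subseteq> {..<B::nat}"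
proof -
  have "0 < B" if "x \<in> E" for x
    using assms that by (metis lessThan_iff mult_0_right not_less_zero gr0I subsetD)
  then show "(\<lambda>x. x mod B) ` E \<subseteq> {..<B}"
    by auto
  show "(\<lambda>x. x div B) ` E \<subseteq> {..<A}"
    using assms by (auto intro: less_mult_imp_div_less)
qed

text \<open>Vertex x of K_{A*B} stands for the pair (x div B, x mod B): an edge between two different
  blocks gets the c1-colour of its pair of blocks, an edge inside a block gets the c2-colour of
  its pair of positions, shifted past the r colours of c1.\<close>
definition prod_colouring ::
    "nat \<Rightarrow> nat \<Rightarrow> (nat set \<Rightarrow> nat) \<Rightarrow> (nat set \<Rightarrow> nat) \<Rightarrow> nat set \<Rightarrow> nat" where
  "prod_colouring B r c1 c2 e =
     (if card ((\<lambda>x. x div B) ` e) = 2 then c1 ((\<lambda>x. x div B) ` e)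
      else r + c2 ((\<lambda>x. x mod B) ` e))"

lemma edge_colouring_prod_colouring:
  assumes c1: "edge_colouring A r c1" and c2: "edge_colouring B s c2"
  shows "edge_colouring (A * B) (r + s) (prod_colouring B r c1 c2)"
  unfolding edge_colouring_def
proof (intro allI impI)
  fix e assume e: "e \<subseteq> {..<A * B} \<and> card e = 2"
  then obtain x y where xy: "e = {x, y}" "x \<noteq> y"
    by (meson card_2_iff)
  show "prod_colouring B r c1 c2 e < r + s"
  proof (cases "x div B = y div B")
    case True
    then have "x mod B \<noteq> y mod B"
      using xy(2) div_mod_eq_imp_eq by blast
    then have "card ((\<lambda>x. x mod B) ` e) = 2"
      using xy(1) by simp
    then have "c2 ((\<lambda>x. x mod B) ` e) < s"
      using c2 div_mod_image_subset(2) e unfolding edge_colouring_def by blast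
    moreover have "card ((\<lambda>x. x div B) ` e) \<noteq> 2"
      using True xy(1) by simp
    ultimately show ?thesis
      unfolding prod_colouring_def by simp
  next
    case False
    then have "card ((\<lambda>x. x div B) ` e) = 2"
      using xy(1) by simp
    moreover from this have "c1 ((\<lambda>x. x div B) ` e) < r"
      using c1 div_mod_image_subset(1) e unfolding edge_colouring_def by blast
    ultimately show ?thesis
      unfolding prod_colouring_def by simp
  qed
qed

lemma mono_clique_prod_colouring_low:
  assumes mono: "mono_clique (prod_colouring B r c1 c2) i S" and "i < r"
  shows "inj_on (\<lambda>x. x div B) S" "mono_clique c1 i ((\<lambda>x. x div B) ` S)"
proof -
  have edge: "prod_colouring B r c1 c2 e = i" if "e \<subseteq> S" "card e = 2" for e
    using mono that unfolding mono_clique_def by blast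
  show inj: "inj_on (\<lambda>x. x div B) S"
  proof (rule inj_onI, rule ccontr)
    fix x y assume "x \<in> S" "y \<in> S" "x div B = y div B" "x \<noteq> y"
    then have "prod_colouring B r c1 c2 {x, y} = i"
      by (intro edge) simp_all
    moreover have "card ((\<lambda>x. x div B) ` {x, y}) \<noteq> 2"
      using \<open>x div B = y div B\<close> by simp
    ultimately show False
      using \<open>i < r\<close> unfolding prod_colouring_def by simp
  qed
  show "mono_clique c1 i ((\<lambda>x. x div B) ` S)"
  proof (rule mono_clique_image[OF inj])
    fix e assume e: "e \<subseteq> S" "card e = 2"
    then have "card ((\<lambda>x. x div B) ` e) = 2"
      using card_image inj_on_subset[OF inj] by metis
    then show "c1 ((\<lambda>x. x div B) ` e) = i"
      using edge[OF e] unfolding prod_colouring_def by simp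
  qed
qed

lemma mono_clique_prod_colouring_high:
  assumes c1: "edge_colouring A r c1" and S: "S \<subseteq> {..<A * B}"
    and mono: "mono_clique (prod_colouring B r c1 c2) (r + j) S"
  shows "inj_on (\<lambda>x. x mod B) S" "mono_clique c2 j ((\<lambda>x. x mod B) ` S)"
proof -
  have edge: "prod_colouring B r c1 c2 e = r + j" if "e \<subseteq> S" "card e = 2" for e
    using mono that unfolding mono_clique_def by blast
  have same_block: "x div B = y div B" if "x \<in> S" "y \<in> S" for x y
  proof (rule ccontr)
    assume ne: "x div B \<noteq> y div B"
    then have "card ((\<lambda>x. x div B) ` {x, y}) = 2"
      by simp
    moreover have "(\<lambda>x. x div B) ` {x, y} \<subseteq> {..<A}"
      using S that by (intro div_mod_image_subset(1)) auto
    ultimately have "c1 ((\<lambda>x. x div B) ` {x, y}) < r"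
      using c1 unfolding edge_colouring_def by blast
    moreover have "prod_colouring B r c1 c2 {x, y} = r + j"
      using that ne by (intro edge) (auto simp: card_2_iff)
    ultimately show False
      using \<open>card ((\<lambda>x. x div B) ` {x, y}) = 2\<close> unfolding prod_colouring_def by simp
  qed
  show inj: "inj_on (\<lambda>x. x mod B) S"
    by (rule inj_onI) (use same_block div_mod_eq_imp_eq in blast)
  show "mono_clique c2 j ((\<lambda>x. x mod B) ` S)"
  proof (rule mono_clique_image[OF inj])
    fix e assume e: "e \<subseteq> S" "card e = 2"
    then obtain x y where xy: "e = {x, y}"
      by (meson card_2_iff)
    then have "x div B = y div B"
      using same_block e(1) by blast
    then have "card ((\<lambda>x. x div B) ` e) \<noteq> 2"
      using xy by simp
    then show "c2 ((\<lambda>x. x mod B) ` e) = j"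
      using edge[OF e] unfolding prod_colouring_def by simp
  qed
qed

lemma not_ramsey_arrow_mult:
  assumes "\<not> ramsey_arrow A as" and "\<not> ramsey_arrow B bs"
  shows "\<not> ramsey_arrow (A * B) (as @ bs)"
proof
  obtain c1 where c1: "edge_colouring A (length as) c1"
    and no_clique1: "\<And>i S. i < length as \<Longrightarrow> S \<subseteq> {..<A} \<Longrightarrow> card S = as ! i
                       \<Longrightarrow> \<not> mono_clique c1 i S"
    using assms(1) unfolding ramsey_arrow_def by blast
  obtain c2 where c2: "edge_colouring B (length bs) c2"
    and no_clique2: "\<And>i S. i < length bs \<Longrightarrow> S \<subseteq> {..<B} \<Longrightarrow> card S = bs ! i
                       \<Longrightarrow> \<not> mono_clique c2 i S"
    using assms(2) unfolding ramsey_arrow_def by blast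
  let ?c = "prod_colouring B (length as) c1 c2"
  assume "ramsey_arrow (A * B) (as @ bs)"
  moreover have "edge_colouring (A * B) (length (as @ bs)) ?c"
    using edge_colouring_prod_colouring[OF c1 c2] by simp
  ultimately obtain i S where i: "i < length (as @ bs)" and S: "S \<subseteq> {..<A * B}"
    and card_S: "card S = (as @ bs) ! i" and mono: "mono_clique ?c i S"
    unfolding ramsey_arrow_def by blast
  show False
  proof (cases "i < length as")
    case True
    note low = mono_clique_prod_colouring_low[OF mono True]
    have "card ((\<lambda>x. x div B) ` S) = as ! i"
      using card_S True card_image[OF low(1)] by (simp add: nth_append)
    then show False
      using no_clique1[OF True div_mod_image_subset(1)[OF S]] low(2) by blast
  next
    case False
    define j where "j = i - length as"
    have j: "j < length bs" "i = length as + j" "(as @ bs) ! i = bs ! j"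
      using False i unfolding j_def by (auto simp: nth_append)
    note high = mono_clique_prod_colouring_high[OF c1 S mono[unfolded j(2)]]
    have "card ((\<lambda>x. x mod B) ` S) = bs ! j"
      using card_S j(3) card_image[OF high(1)] by simp
    then show False
      using no_clique2[OF j(1) div_mod_image_subset(2)[OF S]] high(2) by blast
  qed
qed

lemma ramsey_num_append_gt:
  assumes "0 \<notin> set as" and "0 \<notin> set bs"
  shows "(ramsey_num as - 1) * (ramsey_num bs - 1) < ramsey_num (as @ bs)"
proof -
  have "\<not> ramsey_arrow (ramsey_num as - 1) as" "\<not> ramsey_arrow (ramsey_num bs - 1) bs"
    using ramsey_num_pos[OF assms(1)] ramsey_num_pos[OF assms(2)]
    by (simp_all add: ramsey_arrow_iff_ramsey_num_le)
  then have "\<not> ramsey_arrow ((ramsey_num as - 1) * (ramsey_num bs - 1)) (as @ bs)"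
    by (rule not_ramsey_arrow_mult)
  then show ?thesis
    by (simp add: ramsey_arrow_iff_ramsey_num_le)
qed

definition diagonal_conjecture :: bool where
  "diagonal_conjecture \<longleftrightarrow> (\<forall>s t ks. 3 \<le> s \<and> s \<le> t \<and> (\<forall>k\<in>set ks. 2 \<le> k) \<longrightarrow>
      ramsey_num ((s - 1) # (t + 1) # ks) \<le> ramsey_num (s # t # ks))"

lemma ramsey_num_split_pairs_le:
  assumes DC: diagonal_conjecture and k: "3 \<le> k"
  shows "ramsey_num (replicate j (k - 1) @ replicate j (k + 1) @ replicate m k)
           \<le> ramsey_num (replicate (2 * j + m) k)"
proof (induction j arbitrary: m)
  case 0
  show ?case by simp
next
  case (Suc j)
  define rest where "rest = replicate j (k - 1) @ replicate j (k + 1) @ replicate m k"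
  have "ramsey_num (replicate (Suc j) (k - 1) @ replicate (Suc j) (k + 1) @ replicate m k)
          = ramsey_num ((k - 1) # (k + 1) # rest)"
    unfolding rest_def by (rule ramsey_num_perm) simp
  also have "\<dots> \<le> ramsey_num (k # k # rest)"
    using k unfolding rest_def by (intro DC[unfolded diagonal_conjecture_def, rule_format]) auto
  also have "\<dots> = ramsey_num (replicate j (k - 1) @ replicate j (k + 1) @ replicate (Suc (Suc m)) k)"
    unfolding rest_def by (rule ramsey_num_perm) simp
  also have "\<dots> \<le> ramsey_num (replicate (2 * Suc j + m) k)"
    using Suc.IH[of "Suc (Suc m)"] by simp
  finally show ?case .
qed

theorem lemma1:
  assumes DC: "\<forall>s t ks. 3 \<le> s \<and> s \<le> t \<and> (\<forall>k\<in>set ks. 2 \<le> k) \<longrightarrow>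
      ramsey_num ((s - 1) # (t + 1) # ks) \<le> ramsey_num (s # t # ks)"
  assumes "(k::nat) \<ge> 3" and "(r::nat) \<ge> 1"
  shows "int (ramsey_diag (2 * r) k) - 1 \<ge>
           (int (ramsey_diag r (k - 1)) - 1) * (int (ramsey_diag r (k + 1)) - 1)"
proof -
  have dc: diagonal_conjecture
    using DC unfolding diagonal_conjecture_def .
  have no_zero: "0 \<notin> set (replicate r (k - 1))" "0 \<notin> set (replicate r (k + 1))"
    using \<open>k \<ge> 3\<close> by auto
  have "(ramsey_diag r (k - 1) - 1) * (ramsey_diag r (k + 1) - 1)
          < ramsey_num (replicate r (k - 1) @ replicate r (k + 1))"
    unfolding ramsey_diag_def using no_zero by (rule ramsey_num_append_gt)
  also have "\<dots> \<le> ramsey_diag (2 * r) k"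
    using ramsey_num_split_pairs_le[OF dc \<open>k \<ge> 3\<close>, of r 0] unfolding ramsey_diag_def by simp
  finally have "int ((ramsey_diag r (k - 1) - 1) * (ramsey_diag r (k + 1) - 1))
                  < int (ramsey_diag (2 * r) k)"
    by (simp only: of_nat_less_iff)
  moreover have "0 < ramsey_diag r (k - 1)" "0 < ramsey_diag r (k + 1)"
    unfolding ramsey_diag_def using no_zero by (simp_all add: ramsey_num_pos)
  ultimately show ?thesis
    by (simp add: of_nat_diff)
qed

end
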